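(* Let $R$ be a subring of $\bar{\mathbb{Q}}$ and let $S\subset\mathbb{N}$ be an infinite subset. Then there is no ideal $I$ of $R[q]$ such that the identity of $R[q]$ induces an isomorphism $R[q]^S\cong\varprojlim_j R[q]/I^j$.
   Context: $q$ is an indeterminate. For $n\in\mathbb{N}$, $\Phi_n(q)$ is the $n$th cyclotomic polynomial; for $S\subset\mathbb{N}$, $\Phi_S^*$ is the multiplicative subset of $\mathbb{Z}[q]$ generated by $\{\Phi_m(q):m\in S\}$, directed by divisibility, and $R[q]^S=\varprojlim_{f\in\Phi_S^*}R[q]/(f)$. *)

theory Defs
  imports "HOL-Computational_Algebra.Computational_Algebra" Complex_Main
begin

definition cyclotomic_poly :: "nat \<Rightarrow> complex poly" where
  "cyclotomic_poly n =
     (\<Prod>k\<in>{k. 1 \<le> k \<and> k \<le> n \<and> coprime k n}. [:- cis (2 * pi * real k / real n), 1:])"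

definition subring_of_alg :: "complex set \<Rightarrow> bool" where
  "subring_of_alg R \<longleftrightarrow> R \<subseteq> {x. algebraic x} \<and> 0 \<in> R \<and> 1 \<in> R \<and>
     (\<forall>a\<in>R. \<forall>b\<in>R. a + b \<in> R \<and> a * b \<in> R \<and> - a \<in> R)"

definition Rpoly :: "complex set \<Rightarrow> complex poly set" where
  "Rpoly R = {p. \<forall>i. coeff p i \<in> R}"

definition is_ideal :: "complex set \<Rightarrow> complex poly set \<Rightarrow> bool" where
  "is_ideal R I \<longleftrightarrow> I \<subseteq> Rpoly R \<and> 0 \<in> I \<and>
     (\<forall>a\<in>I. \<forall>b\<in>I. a + b \<in> I) \<and> (\<forall>a\<in>I. \<forall>r\<in>Rpoly R. r * a \<in> I)"

definition ideal_gen :: "complex set \<Rightarrow> complex poly set \<Rightarrow> complex poly set" where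
  "ideal_gen R X = \<Inter>{J. is_ideal R J \<and> X \<subseteq> J}"

primrec ideal_pow :: "complex set \<Rightarrow> complex poly set \<Rightarrow> nat \<Rightarrow> complex poly set" where
  "ideal_pow R I 0 = Rpoly R"
| "ideal_pow R I (Suc j) = ideal_gen R {a * b | a b. a \<in> ideal_pow R I j \<and> b \<in> I}"

definition pideal :: "complex set \<Rightarrow> complex poly \<Rightarrow> complex poly set" where
  "pideal R f = {f * g | g. g \<in> Rpoly R}"

definition Phi_star :: "nat set \<Rightarrow> complex poly set" where
  "Phi_star S = {prod_mset (image_mset cyclotomic_poly M) | M. set_mset M \<subseteq> S}"

text \<open>Elements (representatives) of R[q]^S = lim_{f \<in> \<Phi>_S^*} R[q]/(f), directed by divisibility.\<close>
definition compat_S :: "complex set \<Rightarrow> nat set \<Rightarrow> (complex poly \<Rightarrow> complex poly) \<Rightarrow> bool" where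
  "compat_S R S x \<longleftrightarrow> (\<forall>f\<in>Phi_star S. x f \<in> Rpoly R) \<and>
     (\<forall>f\<in>Phi_star S. \<forall>g\<in>Phi_star S. f dvd g \<longrightarrow> x g - x f \<in> pideal R f)"

text \<open>Elements (representatives) of lim_j R[q]/I^j.\<close>
definition compat_I :: "complex set \<Rightarrow> complex poly set \<Rightarrow> (nat \<Rightarrow> complex poly) \<Rightarrow> bool" where
  "compat_I R I y \<longleftrightarrow> (\<forall>j. y j \<in> Rpoly R) \<and>
     (\<forall>j k. j \<le> k \<longrightarrow> y k - y j \<in> ideal_pow R I j)"

text \<open>y (in the I-adic limit) is sent to x (in R[q]^S) by the map induced by the identity of R[q].\<close>
definition induced :: "complex set \<Rightarrow> nat set \<Rightarrow> complex poly set \<Rightarrow>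
    (nat \<Rightarrow> complex poly) \<Rightarrow> (complex poly \<Rightarrow> complex poly) \<Rightarrow> bool" where
  "induced R S I y x \<longleftrightarrow>
     (\<forall>f\<in>Phi_star S. \<forall>j. ideal_pow R I j \<subseteq> pideal R f \<longrightarrow> y j - x f \<in> pideal R f)"

text \<open>The identity of R[q] induces a map lim_j R[q]/I^j \<rightarrow> R[q]^S (i.e. it is continuous:
  every (f) contains some I^j), and this map is bijective (on equivalence classes).\<close>
definition identity_induces_iso :: "complex set \<Rightarrow> nat set \<Rightarrow> complex poly set \<Rightarrow> bool" where
  "identity_induces_iso R S I \<longleftrightarrow>
     (\<forall>f\<in>Phi_star S. \<exists>j. ideal_pow R I j \<subseteq> pideal R f) \<and>
     (\<forall>y y' x. compat_I R I y \<and> compat_I R I y' \<and> compat_S R S x \<and>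
         induced R S I y x \<and> induced R S I y' x \<longrightarrow> (\<forall>j. y j - y' j \<in> ideal_pow R I j)) \<and>
     (\<forall>x. compat_S R S x \<longrightarrow> (\<exists>y. compat_I R I y \<and> induced R S I y x))"

end

(*
  If the identity induces a map to R[q]^S, every ideal (\<Phi>_m) with m in S contains a power
  of I. A nonzero p in I would then vanish at a primitive m-th root of unity for infinitely
  many m, so I = 0 and the I-adic completion of R[q] is R[q] itself. But R[q]^S contains
  elements that are not polynomials: for a chain F_0 | F_1 | ... in \<Phi>_S^* that is cofinal and
  of strictly increasing degree, the series \<Sum> F_n defines a compatible family, and comparing
  degrees shows that no polynomial is congruent to all its partial sums modulo all F_N.
  The family lies in R[q] because each \<Phi>_m has coefficients in every subring
  (q^m - 1 is the product of the \<Phi>_d with d dividing m, and division by a monic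
  polynomial stays in R[q]).
*)

theory Submission
  imports Defs
begin

lemma no_poly_congruent_to_partial_sums:
  fixes F :: "nat \<Rightarrow> 'a::idom poly"
  assumes mono: "strict_mono (\<lambda>N. degree (F N))"
  shows "\<exists>N. \<not> F N dvd P - (\<Sum>n<N. F n)"
proof (rule ccontr)
  assume "\<nexists>N. \<not> F N dvd P - (\<Sum>n<N. F n)"
  then have dvd: "F N dvd P - (\<Sum>n<N. F n)" for N by blast
  have N_le: "N \<le> degree (F N)" for N
    using strict_mono_imp_increasing[OF mono] .
  have P_eq: "P = (\<Sum>n<N. F n)" if "degree P < N" for N
  proof (rule ccontr)
    assume "P \<noteq> (\<Sum>n<N. F n)"
    have "degree (\<Sum>n<N. F n) < degree (F N)"
      using that N_le[of N] by (intro degree_sum_less) (auto intro: strict_monoD[OF mono])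
    moreover have "degree P < degree (F N)"
      using that N_le[of N] by linarith
    ultimately have "degree (P - (\<Sum>n<N. F n)) < degree (F N)"
      by (rule degree_diff_less[rotated])
    moreover have "degree (F N) \<le> degree (P - (\<Sum>n<N. F n))"
      using dvd_imp_degree_le[OF dvd] \<open>P \<noteq> _\<close> by simp
    ultimately show False by simp
  qed
  have "F (Suc (degree P)) = (\<Sum>n<Suc (Suc (degree P)). F n) - (\<Sum>n<Suc (degree P). F n)"
    by simp
  also have "\<dots> = 0"
    using P_eq[of "Suc (degree P)"] P_eq[of "Suc (Suc (degree P))"] by simp
  finally have "degree (F (Suc (degree P))) = 0" by simp
  then show False using N_le[of "Suc (degree P)"] by simp
qed

lemma Least_dvd_eq_of_strict_mono_degree:
  fixes F :: "nat \<Rightarrow> 'a::idom poly"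
  assumes "strict_mono (\<lambda>N. degree (F N))" and "\<And>N. F N \<noteq> 0"
  shows "(LEAST N. F M dvd F N) = M"
proof (rule Least_equality)
  fix N assume "F M dvd F N"
  then have "degree (F M) \<le> degree (F N)" using assms(2) by (rule dvd_imp_degree_le)
  then show "M \<le> N" using strict_mono_less_eq[OF assms(1)] by simp
qed simp

context
  fixes R :: "complex set"
  assumes R: "subring_of_alg R"
begin

lemma subring_add: "a \<in> R \<Longrightarrow> b \<in> R \<Longrightarrow> a + b \<in> R"
  and subring_mult: "a \<in> R \<Longrightarrow> b \<in> R \<Longrightarrow> a * b \<in> R"
  and subring_diff: "a \<in> R \<Longrightarrow> b \<in> R \<Longrightarrow> a - b \<in> R"
  using R unfolding subring_of_alg_def by (metis diff_conv_add_uminus)+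

lemma subring_sum: "(\<And>i. i \<in> A \<Longrightarrow> f i \<in> R) \<Longrightarrow> sum f A \<in> R"
  by (induction A rule: infinite_finite_induct) (use R in \<open>auto simp: subring_of_alg_def\<close>)

lemma Rpoly_0 [simp]: "0 \<in> Rpoly R"
  using R by (simp add: Rpoly_def subring_of_alg_def)

lemma Rpoly_1 [simp]: "1 \<in> Rpoly R"
  using R by (simp add: Rpoly_def subring_of_alg_def coeff_1)

lemma Rpoly_monom: "c \<in> R \<Longrightarrow> monom c n \<in> Rpoly R"
  using R by (simp add: Rpoly_def subring_of_alg_def coeff_monom)

lemma Rpoly_add: "p \<in> Rpoly R \<Longrightarrow> q \<in> Rpoly R \<Longrightarrow> p + q \<in> Rpoly R"
  by (simp add: Rpoly_def subring_add)

lemma Rpoly_diff: "p \<in> Rpoly R \<Longrightarrow> q \<in> Rpoly R \<Longrightarrow> p - q \<in> Rpoly R"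
  by (simp add: Rpoly_def subring_diff)

lemma Rpoly_mult: "p \<in> Rpoly R \<Longrightarrow> q \<in> Rpoly R \<Longrightarrow> p * q \<in> Rpoly R"
  by (auto simp: Rpoly_def coeff_mult intro!: subring_sum subring_mult)

lemma Rpoly_sum: "(\<And>i. i \<in> A \<Longrightarrow> f i \<in> Rpoly R) \<Longrightarrow> sum f A \<in> Rpoly R"
  by (induction A rule: infinite_finite_induct) (auto intro: Rpoly_add)

lemma Rpoly_prod: "(\<And>i. i \<in> A \<Longrightarrow> f i \<in> Rpoly R) \<Longrightarrow> prod f A \<in> Rpoly R"
  by (induction A rule: infinite_finite_induct) (auto intro: Rpoly_mult)

lemma Rpoly_prod_mset: "(\<And>i. i \<in># M \<Longrightarrow> f i \<in> Rpoly R) \<Longrightarrow> (\<Prod>i\<in>#M. f i) \<in> Rpoly R"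
  by (induction M) (auto intro: Rpoly_mult)

lemma Rpoly_cancel_monic:
  assumes f: "f \<in> Rpoly R" "lead_coeff f = 1" and fh: "f * h \<in> Rpoly R"
  shows "h \<in> Rpoly R"
  using fh
proof (induction "degree h" arbitrary: h rule: less_induct)
  case less
  have "coeff (f * h) (degree f + degree h) \<in> R"
    using less.prems by (simp add: Rpoly_def)
  then have lc: "lead_coeff h \<in> R"
    using f(2) by (simp add: coeff_mult_degree_sum)
  define h' where "h' = h - monom (lead_coeff h) (degree h)"
  have "h' \<in> Rpoly R"
  proof (cases "h' = 0")
    case False
    have "degree h' \<le> degree h"
      unfolding h'_def by (meson degree_diff_le degree_monom_le order.refl)
    then have "degree h' < degree h"
      using False by (intro degree_less_if_less_eqI) (simp_all add: h'_def)
    moreover have "f * h' \<in> Rpoly R"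
      unfolding h'_def right_diff_distrib by (intro Rpoly_diff Rpoly_mult Rpoly_monom less.prems f lc)
    ultimately show ?thesis using less.hyps by blast
  qed simp
  then have "h' + monom (lead_coeff h) (degree h) \<in> Rpoly R"
    by (intro Rpoly_add Rpoly_monom lc)
  then show ?case by (simp add: h'_def)
qed

lemma dvd_monic_imp_pideal:
  assumes "f \<in> Rpoly R" "lead_coeff f = 1" "p \<in> Rpoly R" "f dvd p"
  shows "p \<in> pideal R f"
proof -
  obtain h where h: "p = f * h" using assms(4) by (rule dvdE)
  then have "h \<in> Rpoly R" using assms(1-3) by (auto intro: Rpoly_cancel_monic)
  then show ?thesis using h by (auto simp: pideal_def)
qed

lemma ideal_gen_superset: "X \<subseteq> ideal_gen R X"
  by (auto simp: ideal_gen_def)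

lemma power_in_ideal_pow: "p \<in> I \<Longrightarrow> p ^ j \<in> ideal_pow R I j"
proof (induction j)
  case (Suc j)
  then have "p ^ j * p \<in> {a * b | a b. a \<in> ideal_pow R I j \<and> b \<in> I}" by blast
  then show ?case
    unfolding ideal_pow.simps power_Suc2 by (rule subsetD[OF ideal_gen_superset])
qed simp

lemma ideal_pow_zero_ideal: "ideal_pow R {0} 1 = {0}"
proof -
  have "{a * b | a b. a \<in> ideal_pow R {0} 0 \<and> b \<in> {0}} = {0}"
    by (auto intro!: exI[of _ 0])
  moreover have "ideal_gen R {0} = {0}"
  proof
    have "is_ideal R {0}" by (simp add: is_ideal_def)
    then show "ideal_gen R {0} \<subseteq> {0}" unfolding ideal_gen_def by blast
  qed (rule ideal_gen_superset)
  ultimately show ?thesis by simp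
qed

end

lemma cyclotomic_poly_0 [simp]: "cyclotomic_poly 0 = 1"
proof -
  have "{k::nat. 1 \<le> k \<and> k \<le> 0 \<and> coprime k 0} = {}" by auto
  then show ?thesis unfolding cyclotomic_poly_def by (subst \<open>_ = {}\<close>) simp
qed

lemma lead_coeff_cyclotomic_poly [simp]: "lead_coeff (cyclotomic_poly m) = 1"
  by (simp add: cyclotomic_poly_def lead_coeff_prod)

lemma cyclotomic_poly_nonzero [simp]: "cyclotomic_poly m \<noteq> 0"
  using lead_coeff_cyclotomic_poly[of m] by (metis leading_coeff_0_iff zero_neq_one)

lemma linear_factor_dvd_cyclotomic_poly:
  "m \<ge> 1 \<Longrightarrow> [:- cis (2 * pi / real m), 1:] dvd cyclotomic_poly m"
  unfolding cyclotomic_poly_def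
  using dvd_prodI[of "{k. 1 \<le> k \<and> k \<le> m \<and> coprime k m}" 1
      "\<lambda>k. [:- cis (2 * pi * real k / real m), 1:]"] by simp

lemma poly_cyclotomic_poly_root: "m \<ge> 1 \<Longrightarrow> poly (cyclotomic_poly m) (cis (2 * pi / real m)) = 0"
  using linear_factor_dvd_cyclotomic_poly poly_eq_0_iff_dvd by blast

lemma degree_cyclotomic_poly_pos:
  assumes "m \<ge> 1" shows "degree (cyclotomic_poly m) > 0"
  using dvd_imp_degree_le[OF linear_factor_dvd_cyclotomic_poly[OF assms] cyclotomic_poly_nonzero]
  by simp

lemma inj_on_cis_two_pi_div: "inj_on (\<lambda>m::nat. cis (2 * pi / real m)) {2..}"
proof (rule inj_onI)
  fix m n :: nat
  assume m: "m \<in> {2..}" and n: "n \<in> {2..}" and eq: "cis (2 * pi / m) = cis (2 * pi / n)"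
  have "cos (2 * pi / m) = cos (2 * pi / n)"
    using arg_cong[OF eq, of Re] by simp
  moreover have "0 \<le> 2 * pi / m" "2 * pi / m \<le> pi" "0 \<le> 2 * pi / n" "2 * pi / n \<le> pi"
    using m n by (auto simp: field_simps)
  ultimately have "2 * pi / m = 2 * pi / n" using cos_inj_pi by blast
  then show "m = n" using m n by (auto simp: field_simps)
qed

lemma monom_one_minus_one_eq_prod_roots_of_unity:
  assumes m: "m > 0"
  shows "monom 1 m - 1 = (\<Prod>k\<in>{1..m}. [:- cis (2 * pi * real k / real m), 1:])"
proof -
  define p :: "complex poly" where "p = monom 1 m - 1"
  let ?L = "\<lambda>k::nat. [:- cis (2 * pi * real k / real m), 1:]"
  have "degree p = m"
    unfolding p_def diff_conv_add_uminus
    using m by (subst degree_add_eq_left) (simp_all add: degree_monom_eq)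
  then have lc: "lead_coeff p = 1"
    using m by (simp add: p_def)
  have "pderiv p = monom (of_nat m) (m - 1)"
    by (simp add: p_def pderiv_diff pderiv_monom)
  then have "rsquarefree p"
    using m by (auto simp: rsquarefree_roots p_def poly_monom power_0_left)
  then have "p = (\<Prod>z | poly p z = 0. [:-z, 1:])"
    using complex_poly_decompose_rsquarefree[of p] lc by simp
  also have "\<dots> = (\<Prod>z\<in>{z. z ^ m = 1}. [:-z, 1:])"
    by (simp add: p_def poly_monom)
  also have "\<dots> = (\<Prod>k<m. ?L k)"
    by (subst prod.reindex_bij_betw[OF bij_betw_roots_unity[OF m], symmetric]) simp
  also have "\<dots> = (\<Prod>k\<in>{1..m}. ?L k)"
  proof -
    obtain n where n: "m = Suc n" using m by (cases m) auto
    have "(\<Prod>k<m. ?L k) = ?L 0 * (\<Prod>k<n. ?L (Suc k))"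
      unfolding n by (rule prod.lessThan_Suc_shift)
    also have "?L 0 = ?L m"
      using m by (simp add: complex_eq_iff)
    also have "?L m * (\<Prod>k<n. ?L (Suc k)) = (\<Prod>k\<in>{1..m}. ?L k)"
      by (simp add: n prod.atLeast1_atMost_eq mult.commute del: of_nat_Suc)
    finally show ?thesis .
  qed
  finally show ?thesis by (simp add: p_def)
qed

lemma gcd_class_eq_image_coprime:
  fixes g d :: nat
  assumes "g > 0"
  shows "{k. k \<in> {1..g * d} \<and> gcd k (g * d) = g} = (\<lambda>k. g * k) ` {k. 1 \<le> k \<and> k \<le> d \<and> coprime k d}"
proof (intro equalityI subsetI)
  fix k assume k: "k \<in> {k. k \<in> {1..g * d} \<and> gcd k (g * d) = g}"
  then have "g dvd k" by (metis (mono_tags, lifting) gcd_dvd1 mem_Collect_eq)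
  then obtain k' where k': "k = g * k'" by blast
  have "g * gcd k' d = g" using k by (simp add: k' gcd_mult_distrib_nat)
  then have "coprime k' d" using assms by (simp add: coprime_iff_gcd_eq_1)
  moreover have "1 \<le> k'" "k' \<le> d" using k k' assms by auto
  ultimately show "k \<in> (\<lambda>k. g * k) ` {k. 1 \<le> k \<and> k \<le> d \<and> coprime k d}"
    using k' by blast
next
  fix k assume "k \<in> (\<lambda>k. g * k) ` {k. 1 \<le> k \<and> k \<le> d \<and> coprime k d}"
  then obtain k' where k': "k = g * k'" "1 \<le> k'" "k' \<le> d" "coprime k' d" by blast
  have "gcd k (g * d) = g * gcd k' d" unfolding k'(1) by (rule gcd_mult_distrib_nat[symmetric])
  also have "\<dots> = g" using k'(4) by (simp add: coprime_iff_gcd_eq_1)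
  finally show "k \<in> {k. k \<in> {1..g * d} \<and> gcd k (g * d) = g}" using k' assms by auto
qed

lemma prod_roots_of_unity_gcd_eq_cyclotomic_poly:
  assumes m: "m > 0" and g: "g dvd m"
  shows "(\<Prod>k | k \<in> {1..m} \<and> gcd k m = g. [:- cis (2 * pi * real k / real m), 1:])
         = cyclotomic_poly (m div g)"
proof -
  define d where "d = m div g"
  have md: "m = g * d" using g by (simp add: d_def)
  have g0: "g > 0" and d0: "d > 0" using m md by auto
  let ?C = "{k. 1 \<le> k \<and> k \<le> d \<and> coprime k d}"
  have classes: "{k. k \<in> {1..m} \<and> gcd k m = g} = (\<lambda>k. g * k) ` ?C"
    unfolding md by (rule gcd_class_eq_image_coprime[OF g0])
  have inj: "inj_on (\<lambda>k. g * k) ?C"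
    using g0 by (auto simp: inj_on_def)
  have "(\<Prod>k | k \<in> {1..m} \<and> gcd k m = g. [:- cis (2 * pi * real k / real m), 1:])
      = (\<Prod>k\<in>?C. [:- cis (2 * pi * real (g * k) / real m), 1:])"
    unfolding classes by (subst prod.reindex[OF inj]) simp
  also have "\<dots> = (\<Prod>k\<in>?C. [:- cis (2 * pi * real k / real d), 1:])"
  proof (intro prod.cong refl)
    fix k
    have "2 * pi * real (g * k) / real m = 2 * pi * real k / real d"
      using g0 d0 by (simp add: md field_simps)
    then show "[:- cis (2 * pi * real (g * k) / real m), 1:] = [:- cis (2 * pi * real k / real d), 1:]"
      by simp
  qed
  finally show ?thesis by (simp add: cyclotomic_poly_def d_def)
qed

lemma monom_one_minus_one_eq_prod_cyclotomic_poly: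
  assumes m: "m > 0"
  shows "monom 1 m - 1 = (\<Prod>d | d dvd m. cyclotomic_poly d)"
proof -
  let ?L = "\<lambda>k. [:- cis (2 * pi * real k / real m), 1:]"
  have fin: "finite {g. g dvd m}" using m by simp
  have "monom 1 m - 1 = (\<Prod>k\<in>{1..m}. ?L k)"
    by (rule monom_one_minus_one_eq_prod_roots_of_unity[OF m])
  also have "\<dots> = (\<Prod>g | g dvd m. \<Prod>k | k \<in> {1..m} \<and> gcd k m = g. ?L k)"
    by (rule prod.group[symmetric, OF _ fin]) auto
  also have "\<dots> = (\<Prod>g | g dvd m. cyclotomic_poly (m div g))"
    by (intro prod.cong refl prod_roots_of_unity_gcd_eq_cyclotomic_poly[OF m]) simp
  also have "\<dots> = (\<Prod>d | d dvd m. cyclotomic_poly d)"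
    using m by (intro prod.reindex_bij_witness[of _ "\<lambda>d. m div d" "\<lambda>d. m div d"])
      (auto elim!: dvdE)
  finally show ?thesis .
qed

lemma cyclotomic_poly_in_Rpoly:
  assumes R: "subring_of_alg R"
  shows "cyclotomic_poly m \<in> Rpoly R"
proof (induction m rule: less_induct)
  case (less m)
  show ?case
  proof (cases "m = 0")
    case False
    let ?Q = "\<Prod>d | d dvd m \<and> d \<noteq> m. cyclotomic_poly d"
    have "monom 1 m - 1 = (\<Prod>d | d dvd m. cyclotomic_poly d)"
      using False by (simp add: monom_one_minus_one_eq_prod_cyclotomic_poly)
    also have "\<dots> = cyclotomic_poly m * (\<Prod>d\<in>{d. d dvd m} - {m}. cyclotomic_poly d)"
      using False by (intro prod.remove) simp_all
    also have "{d. d dvd m} - {m} = {d. d dvd m \<and> d \<noteq> m}"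
      by blast
    finally have "monom 1 m - 1 = cyclotomic_poly m * ?Q" .
    moreover have "monom 1 m - 1 \<in> Rpoly R"
      using R by (intro Rpoly_diff Rpoly_monom Rpoly_1) (simp_all add: subring_of_alg_def)
    moreover have "?Q \<in> Rpoly R"
      using False by (intro Rpoly_prod[OF R] less.IH) (auto dest: dvd_imp_le)
    moreover have "lead_coeff ?Q = 1"
      by (simp add: lead_coeff_prod)
    ultimately show ?thesis
      by (metis Rpoly_cancel_monic[OF R] mult.commute)
  qed (simp add: Rpoly_1[OF R])
qed

lemma one_in_Phi_star: "1 \<in> Phi_star S"
  unfolding Phi_star_def by (auto intro!: exI[of _ "{#}"])

lemma cyclotomic_poly_in_Phi_star: "m \<in> S \<Longrightarrow> cyclotomic_poly m \<in> Phi_star S"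
  unfolding Phi_star_def by (auto intro!: exI[of _ "{#m#}"])

lemma Phi_star_mult:
  assumes "f \<in> Phi_star S" "g \<in> Phi_star S"
  shows "f * g \<in> Phi_star S"
proof -
  obtain M N where "f = (\<Prod>m\<in>#M. cyclotomic_poly m)" "g = (\<Prod>m\<in>#N. cyclotomic_poly m)"
    and "set_mset M \<subseteq> S" "set_mset N \<subseteq> S"
    using assms by (auto simp: Phi_star_def)
  then have "f * g = (\<Prod>m\<in>#M + N. cyclotomic_poly m)" "set_mset (M + N) \<subseteq> S"
    by auto
  then show ?thesis unfolding Phi_star_def by blast
qed

lemma Phi_star_prod: "(\<And>i. i \<in> A \<Longrightarrow> f i \<in> Phi_star S) \<Longrightarrow> prod f A \<in> Phi_star S"
  by (induction A rule: infinite_finite_induct) (auto intro: one_in_Phi_star Phi_star_mult)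

lemma lead_coeff_Phi_star: "f \<in> Phi_star S \<Longrightarrow> lead_coeff f = 1"
proof -
  have "lead_coeff (\<Prod>m\<in>#M. cyclotomic_poly m) = 1" for M
    by (induction M) (simp_all add: lead_coeff_mult)
  then show "f \<in> Phi_star S \<Longrightarrow> lead_coeff f = 1"
    by (auto simp: Phi_star_def)
qed

lemma Phi_star_in_Rpoly: "subring_of_alg R \<Longrightarrow> f \<in> Phi_star S \<Longrightarrow> f \<in> Rpoly R"
  by (auto simp: Phi_star_def intro!: Rpoly_prod_mset cyclotomic_poly_in_Rpoly)

(* \<Phi>_(e i) occurs in cyclotomic_tower e N with multiplicity N - i, so the stages exhaust \<Phi>_S^*. *)
definition cyclotomic_tower :: "(nat \<Rightarrow> nat) \<Rightarrow> nat \<Rightarrow> complex poly" where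
  "cyclotomic_tower e N = (\<Prod>n<N. \<Prod>i\<le>n. cyclotomic_poly (e i))"

lemma cyclotomic_tower_Suc:
  "cyclotomic_tower e (Suc N) = cyclotomic_tower e N * (\<Prod>i\<le>N. cyclotomic_poly (e i))"
  by (simp add: cyclotomic_tower_def)

lemma cyclotomic_tower_dvd: "N \<le> M \<Longrightarrow> cyclotomic_tower e N dvd cyclotomic_tower e M"
  unfolding cyclotomic_tower_def by (intro prod_dvd_prod_subset) auto

lemma cyclotomic_tower_in_Phi_star: "range e \<subseteq> S \<Longrightarrow> cyclotomic_tower e N \<in> Phi_star S"
  unfolding cyclotomic_tower_def by (blast intro: Phi_star_prod cyclotomic_poly_in_Phi_star)

lemma Phi_star_dvd_cyclotomic_tower:
  assumes "S - {0} \<subseteq> range e" and "f \<in> Phi_star S"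
  shows "\<exists>N. f dvd cyclotomic_tower e N"
proof -
  obtain M where f: "f = (\<Prod>m\<in>#M. cyclotomic_poly m)" and M: "set_mset M \<subseteq> S"
    using assms(2) by (auto simp: Phi_star_def)
  have "\<exists>N. (\<Prod>m\<in>#M. cyclotomic_poly m) dvd cyclotomic_tower e N"
    using M
  proof (induction M)
    case (add m M)
    then obtain N where N: "(\<Prod>m\<in>#M. cyclotomic_poly m) dvd cyclotomic_tower e N"
      by auto
    show ?case
    proof (cases "m = 0")
      case False
      then obtain i where i: "m = e i" using add.prems assms(1) by auto
      define K where "K = max N i"
      have "(\<Prod>m\<in>#M. cyclotomic_poly m) dvd cyclotomic_tower e K"
        using N cyclotomic_tower_dvd[of N K e] by (auto simp: K_def intro: dvd_trans)
      moreover have "cyclotomic_poly m dvd (\<Prod>i\<le>K. cyclotomic_poly (e i))"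
        unfolding i by (intro dvd_prodI) (auto simp: K_def)
      ultimately have "(\<Prod>m\<in>#M. cyclotomic_poly m) * cyclotomic_poly m dvd cyclotomic_tower e (Suc K)"
        unfolding cyclotomic_tower_Suc by (rule mult_dvd_mono)
      then have "(\<Prod>m\<in>#add_mset m M. cyclotomic_poly m) dvd cyclotomic_tower e (Suc K)"
        by (simp add: mult.commute)
      then show ?thesis ..
    qed (use N in auto)
  qed simp
  then show ?thesis using f by simp
qed

lemma strict_mono_degree_cyclotomic_tower:
  assumes "\<And>i. e i > 0"
  shows "strict_mono (\<lambda>N. degree (cyclotomic_tower e N))"
proof (unfold strict_mono_Suc_iff, intro allI)
  fix N
  have "degree (cyclotomic_poly (e N)) \<le> (\<Sum>i\<le>N. degree (cyclotomic_poly (e i)))"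
    by (intro member_le_sum) auto
  moreover have "degree (cyclotomic_poly (e N)) > 0"
    using assms[of N] by (intro degree_cyclotomic_poly_pos) simp
  moreover have "cyclotomic_tower e N \<noteq> 0"
    by (simp add: cyclotomic_tower_def)
  ultimately show "degree (cyclotomic_tower e N) < degree (cyclotomic_tower e (Suc N))"
    by (simp add: cyclotomic_tower_Suc degree_mult_eq degree_prod_sum_eq)
qed

lemma cofinal_chain_in_Phi_star:
  assumes "infinite S"
  obtains F where "\<And>N. F N \<in> Phi_star S" and "\<And>N. F N dvd F (Suc N)"
    and "strict_mono (\<lambda>N. degree (F N))" and "\<And>f. f \<in> Phi_star S \<Longrightarrow> \<exists>N. f dvd F N"
proof
  \<comment> \<open>\<Phi>_0 = 1 under the product definition; omitting 0 makes every factor nonconstant.\<close>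
  define e where "e = enumerate (S - {0})"
  have e: "range e = S - {0}"
    using assms by (simp add: e_def range_enumerate)
  show "cyclotomic_tower e N \<in> Phi_star S" for N
    using e by (intro cyclotomic_tower_in_Phi_star) auto
  show "cyclotomic_tower e N dvd cyclotomic_tower e (Suc N)" for N
    by (simp add: cyclotomic_tower_dvd)
  show "strict_mono (\<lambda>N. degree (cyclotomic_tower e N))"
    using e by (intro strict_mono_degree_cyclotomic_tower) auto
  show "\<exists>N. f dvd cyclotomic_tower e N" if "f \<in> Phi_star S" for f
    using e that by (intro Phi_star_dvd_cyclotomic_tower) auto
qed

lemma compat_S_partial_sums:
  assumes R: "subring_of_alg R"
    and F_Phi: "\<And>N. F N \<in> Phi_star S" and F_dvd: "\<And>N. F N dvd F (Suc N)"
    and cofinal: "\<And>f. f \<in> Phi_star S \<Longrightarrow> \<exists>N. f dvd F N"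
  shows "compat_S R S (\<lambda>f. \<Sum>n<(LEAST N. f dvd F N). F n)"
proof -
  define \<nu> where "\<nu> f = (LEAST N. f dvd F N)" for f
  have F_Rpoly: "F N \<in> Rpoly R" for N
    using Phi_star_in_Rpoly[OF R F_Phi] .
  have F_dvd_mono: "F N dvd F M" if "N \<le> M" for N M
    using that by (induction M rule: dec_induct) (auto intro: dvd_trans F_dvd)
  have f_dvd: "f dvd F (\<nu> f)" if "f \<in> Phi_star S" for f
    unfolding \<nu>_def using cofinal[OF that] by (rule LeastI_ex)
  have "(\<Sum>n<\<nu> g. F n) - (\<Sum>n<\<nu> f. F n) \<in> pideal R f"
    if f: "f \<in> Phi_star S" and g: "g \<in> Phi_star S" and "f dvd g" for f g
  proof -
    have le: "\<nu> f \<le> \<nu> g"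
      unfolding \<nu>_def[of f] by (rule Least_le) (rule dvd_trans[OF \<open>f dvd g\<close> f_dvd[OF g]])
    have "(\<Sum>n<\<nu> g. F n) - (\<Sum>n<\<nu> f. F n) = (\<Sum>n\<in>{\<nu> f..<\<nu> g}. F n)"
      using le sum_diff_nat_ivl[of 0 "\<nu> f" "\<nu> g" F] by (simp add: atLeast0LessThan)
    also have "F (\<nu> f) dvd \<dots>"
      by (intro dvd_sum F_dvd_mono) simp
    finally have "f dvd (\<Sum>n<\<nu> g. F n) - (\<Sum>n<\<nu> f. F n)"
      using f_dvd[OF f] by (rule dvd_trans[rotated])
    then show ?thesis
      using R f
      by (intro dvd_monic_imp_pideal Phi_star_in_Rpoly lead_coeff_Phi_star Rpoly_diff Rpoly_sum F_Rpoly)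
  qed
  then show ?thesis
    unfolding compat_S_def \<nu>_def[symmetric] by (auto intro: Rpoly_sum[OF R] F_Rpoly)
qed

lemma ideal_eq_zero_if_cyclotomic_ideals_contain_powers:
  assumes R: "subring_of_alg R" and I: "is_ideal R I" and S: "infinite S"
    and powers: "\<forall>f\<in>Phi_star S. \<exists>j. ideal_pow R I j \<subseteq> pideal R f"
  shows "I = {0}"
proof -
  let ?\<zeta> = "\<lambda>m::nat. cis (2 * pi / real m)"
  have "p = 0" if "p \<in> I" for p
  proof (rule ccontr)
    assume "p \<noteq> 0"
    have "poly p (?\<zeta> m) = 0" if m: "m \<in> S - {0, 1}" for m
    proof -
      obtain j where "ideal_pow R I j \<subseteq> pideal R (cyclotomic_poly m)"
        using powers cyclotomic_poly_in_Phi_star m by blast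
      then obtain g where "p ^ j = cyclotomic_poly m * g"
        using power_in_ideal_pow[OF R \<open>p \<in> I\<close>, of j] by (auto simp: pideal_def)
      then have "poly (p ^ j) (?\<zeta> m) = 0"
        using poly_cyclotomic_poly_root[of m] m by simp
      then show ?thesis by simp
    qed
    then have "?\<zeta> ` (S - {0, 1}) \<subseteq> {z. poly p z = 0}" by blast
    moreover have "inj_on ?\<zeta> (S - {0, 1})"
      by (rule inj_on_subset[OF inj_on_cis_two_pi_div]) auto
    then have "infinite (?\<zeta> ` (S - {0, 1}))"
      using S by (simp add: finite_image_iff)
    ultimately show False
      using poly_roots_finite[OF \<open>p \<noteq> 0\<close>] finite_subset by blast
  qed
  moreover have "0 \<in> I" using I by (simp add: is_ideal_def)
  ultimately show ?thesis by blast
qed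

theorem proposition6p2:
  fixes R :: "complex set" and S :: "nat set"
  assumes "subring_of_alg R" and "infinite S"
  shows "\<not> (\<exists>I. is_ideal R I \<and> identity_induces_iso R S I)"
proof
  assume "\<exists>I. is_ideal R I \<and> identity_induces_iso R S I"
  then obtain I where I: "is_ideal R I"
    and powers: "\<forall>f\<in>Phi_star S. \<exists>j. ideal_pow R I j \<subseteq> pideal R f"
    and surj: "\<forall>x. compat_S R S x \<longrightarrow> (\<exists>y. compat_I R I y \<and> induced R S I y x)"
    by (auto simp: identity_induces_iso_def)
  have I0: "I = {0}"
    using ideal_eq_zero_if_cyclotomic_ideals_contain_powers[OF assms(1) I assms(2) powers] .
  obtain F where F_Phi: "\<And>N. F N \<in> Phi_star S" and F_dvd: "\<And>N. F N dvd F (Suc N)"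
    and F_deg: "strict_mono (\<lambda>N. degree (F N))"
    and cofinal: "\<And>f. f \<in> Phi_star S \<Longrightarrow> \<exists>N. f dvd F N"
    using cofinal_chain_in_Phi_star[OF assms(2)] by blast
  define x where "x f = (\<Sum>n<(LEAST N. f dvd F N). F n)" for f
  have "compat_S R S x"
    unfolding x_def using assms(1) F_Phi F_dvd cofinal by (rule compat_S_partial_sums)
  then obtain y where y: "induced R S I y x" using surj by blast
  have F_nonzero: "F N \<noteq> 0" for N
    using lead_coeff_Phi_star[OF F_Phi, of N] by auto
  have x_F: "x (F N) = (\<Sum>n<N. F n)" for N
    unfolding x_def using F_deg F_nonzero by (subst Least_dvd_eq_of_strict_mono_degree) auto
  have "F N dvd y 1 - (\<Sum>n<N. F n)" for N
  proof -
    have "ideal_pow R I 1 \<subseteq> pideal R (F N)"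
      using I0 ideal_pow_zero_ideal[OF assms(1)] Rpoly_0[OF assms(1)]
      by (auto simp: pideal_def intro!: exI[of _ 0])
    then have "y 1 - x (F N) \<in> pideal R (F N)"
      using y F_Phi by (auto simp: induced_def)
    then show ?thesis by (auto simp: pideal_def x_F)
  qed
  then show False using no_poly_congruent_to_partial_sums[OF F_deg] by blast
qed

end
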